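(* Let ${\rm F}_5\subset\mathbb{P}^3(\mathbb{C})$ be the Fermat quintic $x^5-y^5-z^5+w^5=0$. The maximal number of pairwise disjoint lines contained in ${\rm F}_5$ is $13$. *)

theory Defs
  imports Complex_Main
begin

text \<open>Homogeneous coordinates of P^3(C): vectors (x,y,z,w) in C^4.
  A projective line is the projectivisation of a 2-dimensional complex
  linear subspace of C^4; we represent it by that subspace.\<close>

type_synonym cvec4 = "complex \<times> complex \<times> complex \<times> complex"

definition lincomb :: "complex \<Rightarrow> cvec4 \<Rightarrow> complex \<Rightarrow> cvec4 \<Rightarrow> cvec4" where
  "lincomb a p b q =
     (case p of (p1,p2,p3,p4) \<Rightarrow> case q of (q1,q2,q3,q4) \<Rightarrow>
       (a*p1 + b*q1, a*p2 + b*q2, a*p3 + b*q3, a*p4 + b*q4))"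

definition cindep2 :: "cvec4 \<Rightarrow> cvec4 \<Rightarrow> bool" where
  "cindep2 p q \<longleftrightarrow> (\<forall>a b. lincomb a p b q = (0,0,0,0) \<longrightarrow> a = 0 \<and> b = 0)"

definition cspan2 :: "cvec4 \<Rightarrow> cvec4 \<Rightarrow> cvec4 set" where
  "cspan2 p q = {lincomb a p b q | a b. True}"

definition proj_line :: "cvec4 set \<Rightarrow> bool" where
  "proj_line L \<longleftrightarrow> (\<exists>p q. cindep2 p q \<and> L = cspan2 p q)"

definition fermat5 :: "cvec4 \<Rightarrow> complex" where
  "fermat5 v = (case v of (x,y,z,w) \<Rightarrow> x^5 - y^5 - z^5 + w^5)"

definition line_on_F5 :: "cvec4 set \<Rightarrow> bool" where
  "line_on_F5 L \<longleftrightarrow> proj_line L \<and> (\<forall>v\<in>L. fermat5 v = 0)"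

text \<open>Two projective lines are disjoint iff the subspaces meet only in 0.\<close>
definition disjoint_lines :: "cvec4 set \<Rightarrow> cvec4 set \<Rightarrow> bool" where
  "disjoint_lines L M \<longleftrightarrow> L \<inter> M = {(0,0,0,0)}"

end

(*
  Restricted to a line, a diagonal quintic e1 x^5 + e2 y^5 + e3 z^5 + e4 w^5 becomes a sum of fifth
  powers of four binary linear forms.  Comparing coefficients shows that the forms split into two
  proportional pairs whose fifth powers cancel, so every line on F5 is one of the 75 lines
    x = a y, z = b w;   x = a z, y = b w;   x = -a w, y = -b z      (a^5 = b^5 = 1).

  Two such lines of the same family are disjoint iff both parameters differ, so in a disjoint set
  the parameters of each family form a partial permutation of the fifth roots of unity mu5.  Lines
  of different families are disjoint iff a/b differs from c/d (first and second family), a b from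
  c/d (first and third), a b from c d (second and third).  Hence the six sets of quotients and
  products of the three partial permutations form three disjoint pairs of subsets of mu5.

  A partial permutation with n elements, q quotients and m products has n <= q m, because
  a^2 = (a/b) (a b).  This gives 2 n <= q + m + 4 for n < 5.  For n = 5 the same bound holds
  because q = 2 is impossible: the permutation would divide by one constant on a set X and by
  another on its complement, which makes X invariant under a nontrivial fifth root of unity,
  hence trivial since 5 is prime; m = 2 is excluded likewise after replacing a by 1/a, which
  swaps quotients and products.  Summing over the three families, 2 (n1 + n2 + n3) <= 15 + 12.
  An explicit choice of 5 + 4 + 4 lines attains the bound.
*)

theory Submission
  imports Defs "HOL-Computational_Algebra.Polynomial"
begin

section \<open>Binary linear forms whose fifth powers sum to zero\<close>

lemma quintic_poly_coeffs_eq_0: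
  fixes c0 c1 c2 c3 c4 c5 :: "'a::{idom,ring_char_0}"
  assumes "\<And>u. c0 + c1*u + c2*u^2 + c3*u^3 + c4*u^4 + c5*u^5 = 0"
  shows "c0 = 0 \<and> c1 = 0 \<and> c2 = 0 \<and> c3 = 0 \<and> c4 = 0 \<and> c5 = 0"
proof -
  have "poly [:c0, c1, c2, c3, c4, c5:] u = 0" for u
    using assms[of u] by (simp add: algebra_simps power_numeral_reduce)
  then have "[:c0, c1, c2, c3, c4, c5:] = 0"
    using poly_all_0_iff_0 by blast
  then show ?thesis by simp
qed

lemma diagonal_quintic_binary:
  fixes e1 e2 e3 e4 A B C D :: "'a::field_char_0"
  assumes ne: "e1 \<noteq> 0" "e2 \<noteq> 0" "e3 \<noteq> 0" "e4 \<noteq> 0"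
    and vanish: "\<And>u v. e1 * u^5 + e2 * v^5 + e3 * (A*u + B*v)^5 + e4 * (C*u + D*v)^5 = 0"
  shows "B = 0 \<and> C = 0 \<or> A = 0 \<and> D = 0"
proof -
  have "(e2 + e3*B^5 + e4*D^5) + (5*(e3*A*B^4 + e4*C*D^4))*u + (10*(e3*A^2*B^3 + e4*C^2*D^3))*u^2
      + (10*(e3*A^3*B^2 + e4*C^3*D^2))*u^3 + (5*(e3*A^4*B + e4*C^4*D))*u^4 + (e1 + e3*A^5 + e4*C^5)*u^5 = 0"
    for u
    using vanish[of u 1] by (simp add: algebra_simps power_numeral_reduce)
  from quintic_poly_coeffs_eq_0[OF this]
  have E0: "e2 + e3*B^5 + e4*D^5 = 0"
    and E1: "e3*A*B^4 + e4*C*D^4 = 0"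
    and E3: "e3*A^3*B^2 + e4*C^3*D^2 = 0"
    and E4: "e3*A^4*B + e4*C^4*D = 0"
    and E5: "e1 + e3*A^5 + e4*C^5 = 0"
    by (simp_all del: distrib_left_numeral)
  show ?thesis
  proof (cases "A = 0 \<or> B = 0 \<or> C = 0 \<or> D = 0")
    case True
    then show ?thesis
      using E0 E1 E4 E5 ne by (auto simp: power_numeral_reduce)
  next
    case False
    have "e3*e4*A^3*B*C^3*D * (A*D - B*C) = (e3*A^4*B) * (e4*C^3*D^2) - (e3*A^3*B^2) * (e4*C^4*D)"
      by (simp add: algebra_simps power_numeral_reduce)
    also have "\<dots> = 0"
      using E3 E4 by (simp add: eq_neg_iff_add_eq_0[symmetric] algebra_simps)
    finally have "A*D = B*C" using False ne by simp
    define r where "r = C / A"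
    have C: "C = r*A" and D: "D = r*B"
      using False \<open>A*D = B*C\<close> by (auto simp: r_def field_simps)
    have "A^4*B * (e3 + e4*r^5) = 0"
      using E4 unfolding C D by (simp add: algebra_simps power_numeral_reduce)
    then have "e3 + e4*r^5 = 0" using False by simp
    moreover have "e1 + A^5 * (e3 + e4*r^5) = 0"
      using E5 unfolding C by (simp add: algebra_simps power_numeral_reduce)
    ultimately show ?thesis using ne by simp
  qed
qed

definition lform :: "'a::field \<times> 'a \<Rightarrow> 'a \<Rightarrow> 'a \<Rightarrow> 'a" where
  "lform f s t = fst f * s + snd f * t"

definition det2 :: "'a::field \<times> 'a \<Rightarrow> 'a \<times> 'a \<Rightarrow> 'a" where
  "det2 f g = fst f * snd g - snd f * fst g"

text \<open>The summands \<open>e f^5\<close> and \<open>e' g^5\<close> cancel identically.\<close>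

definition cancelling :: "'a::field \<Rightarrow> 'a \<times> 'a \<Rightarrow> 'a \<Rightarrow> 'a \<times> 'a \<Rightarrow> bool" where
  "cancelling e f e' g \<longleftrightarrow> (\<exists>c. e + e' * c^5 = 0 \<and> g = (c * fst f, c * snd f))"

lemma lform_solve:
  assumes "det2 f g \<noteq> 0"
  shows "\<exists>s t. lform f s t = u \<and> lform g s t = v"
proof (intro exI conjI)
  show "lform f ((u * snd g - v * snd f) / det2 f g) ((v * fst f - u * fst g) / det2 f g) = u"
    and "lform g ((u * snd g - v * snd f) / det2 f g) ((v * fst f - u * fst g) / det2 f g) = v"
    using assms by (simp_all add: lform_def field_simps) (simp_all add: det2_def algebra_simps)
qed

lemma lform_combination:
  assumes "det2 f g \<noteq> 0"
  shows "\<exists>A B. \<forall>s t. lform h s t = A * lform f s t + B * lform g s t"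
proof (intro exI allI)
  fix s t
  show "lform h s t = det2 h g / det2 f g * lform f s t + det2 f h / det2 f g * lform g s t"
    using assms by (simp add: lform_def field_simps) (simp add: det2_def algebra_simps)
qed

lemma cancelling_sym:
  assumes "cancelling e f e' g" "e \<noteq> 0"
  shows "cancelling e' g e f"
proof -
  obtain c where c: "e + e' * c^5 = 0" and g: "g = (c * fst f, c * snd f)"
    using assms(1) by (auto simp: cancelling_def)
  have "c \<noteq> 0" using c assms(2) by auto
  then have "e' + e * (1/c)^5 = 0" and "f = (1/c * fst g, 1/c * snd g)"
    using c g by (auto simp: field_simps)
  then show ?thesis by (auto simp: cancelling_def)
qed

lemma diagonal_quintic_chart:
  fixes e1 e2 e3 e4 :: "'a::field_char_0"
  assumes ne: "e1 \<noteq> 0" "e2 \<noteq> 0" "e3 \<noteq> 0" "e4 \<noteq> 0" and chart: "det2 f1 f2 \<noteq> 0"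
    and vanish: "\<And>s t. e1 * lform f1 s t ^ 5 + e2 * lform f2 s t ^ 5
                        + e3 * lform f3 s t ^ 5 + e4 * lform f4 s t ^ 5 = 0"
  shows "cancelling e1 f1 e3 f3 \<and> cancelling e2 f2 e4 f4 \<or>
         cancelling e1 f1 e4 f4 \<and> cancelling e2 f2 e3 f3"
proof -
  obtain A B where f3: "\<And>s t. lform f3 s t = A * lform f1 s t + B * lform f2 s t"
    using lform_combination[OF chart] by blast
  obtain C D where f4: "\<And>s t. lform f4 s t = C * lform f1 s t + D * lform f2 s t"
    using lform_combination[OF chart] by blast
  have binary: "e1 * u^5 + e2 * v^5 + e3 * (A*u + B*v)^5 + e4 * (C*u + D*v)^5 = 0" for u v
  proof -
    obtain s t where "lform f1 s t = u" "lform f2 s t = v"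
      using lform_solve[OF chart] by blast
    then show ?thesis using vanish[of s t] by (simp add: f3 f4)
  qed
  have f3_eq: "f3 = (A * fst f1 + B * fst f2, A * snd f1 + B * snd f2)"
    using f3[of 1 0] f3[of 0 1] by (simp add: lform_def prod_eq_iff)
  have f4_eq: "f4 = (C * fst f1 + D * fst f2, C * snd f1 + D * snd f2)"
    using f4[of 1 0] f4[of 0 1] by (simp add: lform_def prod_eq_iff)
  from diagonal_quintic_binary[OF ne binary] show ?thesis
  proof
    assume "B = 0 \<and> C = 0"
    then show ?thesis
      using binary[of 1 0] binary[of 0 1] f3_eq f4_eq by (auto simp: cancelling_def)
  next
    assume "A = 0 \<and> D = 0"
    then show ?thesis
      using binary[of 1 0] binary[of 0 1] f3_eq f4_eq by (auto simp: cancelling_def)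
  qed
qed

lemma some_det2_nonzero:
  fixes f1 f2 f3 f4 :: "'a::field \<times> 'a"
  assumes "\<forall>s t. lform f1 s t = 0 \<and> lform f2 s t = 0 \<and> lform f3 s t = 0 \<and> lform f4 s t = 0
             \<longrightarrow> s = 0 \<and> t = 0"
  shows "det2 f1 f2 \<noteq> 0 \<or> det2 f1 f3 \<noteq> 0 \<or> det2 f1 f4 \<noteq> 0 \<or>
         det2 f2 f3 \<noteq> 0 \<or> det2 f2 f4 \<noteq> 0 \<or> det2 f3 f4 \<noteq> 0"
proof (rule ccontr)
  assume "\<not> ?thesis"
  then have dets: "det2 f g = 0" if "f \<in> {f1, f2, f3, f4}" "g \<in> {f1, f2, f3, f4}" for f g
    using that by (auto simp: det2_def algebra_simps)
  have "f = (0, 0)" if f: "f \<in> {f1, f2, f3, f4}" for f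
  proof -
    have "lform g (snd f) (- fst f) = - det2 f g" for g
      by (simp add: lform_def det2_def algebra_simps)
    then show ?thesis
      using assms[rule_format, of "snd f" "- fst f"] dets[OF f] by (simp add: prod_eq_iff)
  qed
  then have "f1 = (0, 0)" "f2 = (0, 0)" "f3 = (0, 0)" "f4 = (0, 0)"
    by auto
  then show False
    using assms[rule_format, of 1 0] by (simp add: lform_def)
qed

lemma diagonal_quintic_pairing:
  fixes e1 e2 e3 e4 :: "'a::field_char_0"
  assumes ne: "e1 \<noteq> 0" "e2 \<noteq> 0" "e3 \<noteq> 0" "e4 \<noteq> 0"
    and no_common_zero: "\<forall>s t. lform f1 s t = 0 \<and> lform f2 s t = 0 \<and> lform f3 s t = 0
                           \<and> lform f4 s t = 0 \<longrightarrow> s = 0 \<and> t = 0"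
    and vanish: "\<And>s t. e1 * lform f1 s t ^ 5 + e2 * lform f2 s t ^ 5
                        + e3 * lform f3 s t ^ 5 + e4 * lform f4 s t ^ 5 = 0"
  shows "cancelling e2 f2 e1 f1 \<and> cancelling e4 f4 e3 f3 \<or>
         cancelling e3 f3 e1 f1 \<and> cancelling e4 f4 e2 f2 \<or>
         cancelling e4 f4 e1 f1 \<and> cancelling e3 f3 e2 f2"
proof -
  note sym = cancelling_sym[OF _ ne(1)] cancelling_sym[OF _ ne(2)]
    cancelling_sym[OF _ ne(3)] cancelling_sym[OF _ ne(4)]
  have "det2 f1 f2 \<noteq> 0 \<or> det2 f1 f3 \<noteq> 0 \<or> det2 f1 f4 \<noteq> 0 \<or>
        det2 f2 f3 \<noteq> 0 \<or> det2 f2 f4 \<noteq> 0 \<or> det2 f3 f4 \<noteq> 0"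
    using no_common_zero by (rule some_det2_nonzero)
  then show ?thesis
  proof (elim disjE)
    assume "det2 f1 f2 \<noteq> 0"
    from diagonal_quintic_chart[OF ne(1,2,3,4) this vanish] show ?thesis
      using sym by blast
  next
    assume chart: "det2 f1 f3 \<noteq> 0"
    have "\<And>s t. e1 * lform f1 s t ^ 5 + e3 * lform f3 s t ^ 5
                 + e2 * lform f2 s t ^ 5 + e4 * lform f4 s t ^ 5 = 0"
      using vanish by (simp add: ac_simps)
    from diagonal_quintic_chart[OF ne(1,3,2,4) chart this] show ?thesis
      using sym by blast
  next
    assume chart: "det2 f1 f4 \<noteq> 0"
    have "\<And>s t. e1 * lform f1 s t ^ 5 + e4 * lform f4 s t ^ 5
                 + e2 * lform f2 s t ^ 5 + e3 * lform f3 s t ^ 5 = 0"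
      using vanish by (simp add: ac_simps)
    from diagonal_quintic_chart[OF ne(1,4,2,3) chart this] show ?thesis
      using sym by blast
  next
    assume chart: "det2 f2 f3 \<noteq> 0"
    have "\<And>s t. e2 * lform f2 s t ^ 5 + e3 * lform f3 s t ^ 5
                 + e1 * lform f1 s t ^ 5 + e4 * lform f4 s t ^ 5 = 0"
      using vanish by (simp add: ac_simps)
    from diagonal_quintic_chart[OF ne(2,3,1,4) chart this] show ?thesis
      using sym by blast
  next
    assume chart: "det2 f2 f4 \<noteq> 0"
    have "\<And>s t. e2 * lform f2 s t ^ 5 + e4 * lform f4 s t ^ 5
                 + e1 * lform f1 s t ^ 5 + e3 * lform f3 s t ^ 5 = 0"
      using vanish by (simp add: ac_simps)
    from diagonal_quintic_chart[OF ne(2,4,1,3) chart this] show ?thesis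
      using sym by blast
  next
    assume chart: "det2 f3 f4 \<noteq> 0"
    have "\<And>s t. e3 * lform f3 s t ^ 5 + e4 * lform f4 s t ^ 5
                 + e1 * lform f1 s t ^ 5 + e2 * lform f2 s t ^ 5 = 0"
      using vanish by (simp add: ac_simps)
    from diagonal_quintic_chart[OF ne(3,4,1,2) chart this] show ?thesis
      using sym by blast
  qed
qed

section \<open>Fifth roots of unity\<close>

definition mu5 :: "complex set" where
  "mu5 = {z. z^5 = 1}"

lemma finite_mu5 [simp]: "finite mu5"
  unfolding mu5_def by (rule finite_roots_unity) simp

lemma card_mu5 [simp]: "card mu5 = 5"
  unfolding mu5_def by (rule card_roots_unity_eq) simp

lemma mu5_nonzero: "a \<in> mu5 \<Longrightarrow> a \<noteq> 0"
  by (auto simp: mu5_def)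

lemma mu5_mult [intro]: "a \<in> mu5 \<Longrightarrow> b \<in> mu5 \<Longrightarrow> a * b \<in> mu5"
  by (simp add: mu5_def power_mult_distrib)

lemma mu5_divide [intro]: "a \<in> mu5 \<Longrightarrow> b \<in> mu5 \<Longrightarrow> a / b \<in> mu5"
  by (simp add: mu5_def power_divide)

lemma mu5_inverse [intro]: "a \<in> mu5 \<Longrightarrow> inverse a \<in> mu5"
  by (simp add: mu5_def power_inverse)

lemma inj_on_square_mu5: "inj_on (\<lambda>a. a^2) mu5"
proof (rule inj_onI)
  fix a b :: complex
  assume "a \<in> mu5" "b \<in> mu5" "a^2 = b^2"
  have cube_square: "(c^2)^3 = c" if "c \<in> mu5" for c :: complex
    using that by (simp add: mu5_def flip: power_mult) (simp add: power_Suc2[of c 5, simplified])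
  show "a = b"
    using cube_square[OF \<open>a \<in> mu5\<close>] cube_square[OF \<open>b \<in> mu5\<close>] \<open>a^2 = b^2\<close> by metis
qed

lemma mu5_power_eq_1:
  assumes "r \<in> mu5" "r^k = 1" "0 < k" "k < 5"
  shows "r = 1"
proof -
  have "k \<in> {1, 2, 3, 4}"
    using assms(3,4) by auto
  then have "gcd k 5 = 1"
    by (auto simp: gcd_non_0_nat)
  then obtain i j where "k * i = 5 * j + 1"
    using bezout_nat[of k 5] assms(3) by auto
  then have "r = (r^5)^j * r" using assms(1) by (simp add: mu5_def)
  also have "\<dots> = (r^k)^i"
    by (simp flip: power_mult power_Suc2 add: \<open>k * i = 5 * j + 1\<close>)
  finally show ?thesis using assms(2) by simp
qed

lemma mu5_orbit_eq:
  assumes X: "X \<subseteq> mu5" and "x \<in> X" and r: "r \<in> mu5" "r \<noteq> 1"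
    and closed: "\<And>y. y \<in> X \<Longrightarrow> r * y \<in> X"
  shows "X = mu5"
proof -
  have orbit: "r^k * x \<in> X" for k
    by (induction k) (use \<open>x \<in> X\<close> closed in \<open>auto simp: mult.assoc\<close>)
  have powers_distinct: "r^i \<noteq> r^j" if "i < j" "j < 5" for i j
  proof
    assume "r^i = r^j"
    moreover have "r^i * r^(j - i) = r^j"
      using \<open>i < j\<close> by (simp flip: power_add)
    ultimately have "r^i * r^(j - i) = r^i * 1"
      by simp
    then have "r^(j - i) = 1"
      using mu5_nonzero[OF r(1)] by simp
    moreover have "0 < j - i" "j - i < 5"
      using that by auto
    ultimately show False
      using mu5_power_eq_1[OF r(1)] r(2) by blast
  qed
  have "inj_on (\<lambda>k. r^k * x) {..<5}"
  proof (rule inj_onI)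
    fix i j assume "i \<in> {..<5}" "j \<in> {..<5}" "r^i * x = r^j * x"
    then show "i = j"
      using powers_distinct mu5_nonzero X \<open>x \<in> X\<close>
      by (metis lessThan_iff linorder_neqE_nat mult_right_cancel subsetD)
  qed
  then have "card ((\<lambda>k. r^k * x) ` {..<5}) = 5"
    by (simp add: card_image)
  moreover have "(\<lambda>k. r^k * x) ` {..<5} \<subseteq> X"
    using orbit by auto
  ultimately have "5 \<le> card X"
    by (metis X card_mono finite_mu5 finite_subset)
  then show ?thesis
    using X by (simp add: card_seteq)
qed

lemma mu5_no_split:
  assumes XY: "X \<union> Y = mu5" "X \<inter> Y = {}" and m: "m1 \<in> mu5" "m2 \<in> mu5"
    and disj: "(*) m1 ` X \<inter> (*) m2 ` Y = {}"
  shows "X = {} \<or> Y = {} \<or> m1 = m2"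
proof (rule ccontr)
  assume "\<not> ?thesis"
  then obtain x where "x \<in> X" and "Y \<noteq> {}" and "m1 \<noteq> m2" by auto
  define r where "r = m1 / m2"
  have "m2 \<noteq> 0" using m(2) by (rule mu5_nonzero)
  have "r * y \<in> X" if "y \<in> X" for y
  proof -
    have "r * y \<notin> Y"
    proof
      assume "r * y \<in> Y"
      moreover have "m2 * (r * y) = m1 * y" using \<open>m2 \<noteq> 0\<close> by (simp add: r_def)
      ultimately have "m1 * y \<in> (*) m2 ` Y" by (metis image_eqI)
      then show False using disj that by blast
    qed
    moreover have "r * y \<in> mu5" using XY m that by (auto simp: r_def)
    ultimately show ?thesis using XY by auto
  qed
  moreover have "r \<in> mu5" "r \<noteq> 1"
    using m \<open>m1 \<noteq> m2\<close> \<open>m2 \<noteq> 0\<close> by (auto simp: r_def)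
  ultimately have "X = mu5"
    using mu5_orbit_eq[of X x r] XY \<open>x \<in> X\<close> by auto
  then show False using XY \<open>Y \<noteq> {}\<close> by auto
qed

section \<open>The lines on the Fermat quintic\<close>

definition line_xy :: "complex \<Rightarrow> complex \<Rightarrow> cvec4 set" where
  "line_xy a b = {(x, y, z, w). x = a*y \<and> z = b*w}"

definition line_xz :: "complex \<Rightarrow> complex \<Rightarrow> cvec4 set" where
  "line_xz a b = {(x, y, z, w). x = a*z \<and> y = b*w}"

text \<open>The signs let all three families be parametrised by \<open>mu5\<close>.\<close>

definition line_xw :: "complex \<Rightarrow> complex \<Rightarrow> cvec4 set" where
  "line_xw a b = {(x, y, z, w). x = - (a*w) \<and> y = - (b*z)}"

text \<open>\<open>cspan2 p q\<close> is the \<open>form_line\<close> of the coefficient pairs \<open>(p_k, q_k)\<close>.\<close>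

definition form_line ::
    "complex \<times> complex \<Rightarrow> complex \<times> complex \<Rightarrow> complex \<times> complex \<Rightarrow> complex \<times> complex \<Rightarrow> cvec4 set"
  where
  "form_line f1 f2 f3 f4 = {(lform f1 s t, lform f2 s t, lform f3 s t, lform f4 s t) | s t. True}"

lemma form_line_eq_line_xy:
  assumes "f1 = (a * fst f2, a * snd f2)" "f3 = (b * fst f4, b * snd f4)" "det2 f2 f4 \<noteq> 0"
  shows "form_line f1 f2 f3 f4 = line_xy a b"
proof
  show "form_line f1 f2 f3 f4 \<subseteq> line_xy a b"
    using assms by (auto simp: form_line_def line_xy_def lform_def algebra_simps)
  show "line_xy a b \<subseteq> form_line f1 f2 f3 f4"
  proof (clarsimp simp: line_xy_def)
    fix y w
    obtain s t where "lform f2 s t = y" "lform f4 s t = w"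
      using lform_solve[OF assms(3)] by blast
    then have "(a*y, y, b*w, w) = (lform f1 s t, lform f2 s t, lform f3 s t, lform f4 s t)"
      using assms by (auto simp: lform_def algebra_simps)
    then show "(a*y, y, b*w, w) \<in> form_line f1 f2 f3 f4"
      unfolding form_line_def by blast
  qed
qed

lemma form_line_eq_line_xz:
  assumes "f1 = (a * fst f3, a * snd f3)" "f2 = (b * fst f4, b * snd f4)" "det2 f3 f4 \<noteq> 0"
  shows "form_line f1 f2 f3 f4 = line_xz a b"
proof
  show "form_line f1 f2 f3 f4 \<subseteq> line_xz a b"
    using assms by (auto simp: form_line_def line_xz_def lform_def algebra_simps)
  show "line_xz a b \<subseteq> form_line f1 f2 f3 f4"
  proof (clarsimp simp: line_xz_def)
    fix z w
    obtain s t where "lform f3 s t = z" "lform f4 s t = w"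
      using lform_solve[OF assms(3)] by blast
    then have "(a*z, b*w, z, w) = (lform f1 s t, lform f2 s t, lform f3 s t, lform f4 s t)"
      using assms by (auto simp: lform_def algebra_simps)
    then show "(a*z, b*w, z, w) \<in> form_line f1 f2 f3 f4"
      unfolding form_line_def by blast
  qed
qed

lemma form_line_eq_line_xw:
  assumes "f1 = (- a * fst f4, - a * snd f4)" "f2 = (- b * fst f3, - b * snd f3)" "det2 f3 f4 \<noteq> 0"
  shows "form_line f1 f2 f3 f4 = line_xw a b"
proof
  show "form_line f1 f2 f3 f4 \<subseteq> line_xw a b"
    using assms by (auto simp: form_line_def line_xw_def lform_def algebra_simps)
  show "line_xw a b \<subseteq> form_line f1 f2 f3 f4"
  proof (clarsimp simp: line_xw_def)
    fix z w
    obtain s t where "lform f3 s t = z" "lform f4 s t = w"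
      using lform_solve[OF assms(3)] by blast
    then have "(- (a*w), - (b*z), z, w) = (lform f1 s t, lform f2 s t, lform f3 s t, lform f4 s t)"
      using assms by (auto simp: lform_def algebra_simps)
    then show "(- (a*w), - (b*z), z, w) \<in> form_line f1 f2 f3 f4"
      unfolding form_line_def by blast
  qed
qed

lemma line_on_F5_form_line:
  assumes "line_on_F5 L"
  obtains f1 f2 f3 f4 where "L = form_line f1 f2 f3 f4"
    and "\<forall>s t. lform f1 s t = 0 \<and> lform f2 s t = 0 \<and> lform f3 s t = 0
      \<and> lform f4 s t = 0 \<longrightarrow> s = 0 \<and> t = 0"
    and "\<And>s t. 1 * lform f1 s t ^ 5 + (-1) * lform f2 s t ^ 5
      + (-1) * lform f3 s t ^ 5 + 1 * lform f4 s t ^ 5 = 0"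
proof -
  obtain p1 p2 p3 p4 q1 q2 q3 q4 where indep: "cindep2 (p1, p2, p3, p4) (q1, q2, q3, q4)"
    and L: "L = cspan2 (p1, p2, p3, p4) (q1, q2, q3, q4)" and on: "\<forall>v\<in>L. fermat5 v = 0"
    using assms unfolding line_on_F5_def proj_line_def by (metis prod_cases4)
  define f1 f2 f3 f4 where "f1 = (p1, q1)" and "f2 = (p2, q2)" and "f3 = (p3, q3)" and "f4 = (p4, q4)"
  have L_forms: "L = form_line f1 f2 f3 f4"
    unfolding L form_line_def cspan2_def lincomb_def lform_def f1_def f2_def f3_def f4_def
    by (auto simp: ac_simps)
  have no_common_zero: "\<forall>s t. lform f1 s t = 0 \<and> lform f2 s t = 0 \<and> lform f3 s t = 0
      \<and> lform f4 s t = 0 \<longrightarrow> s = 0 \<and> t = 0"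
  proof (intro allI impI)
    fix s t
    assume "lform f1 s t = 0 \<and> lform f2 s t = 0 \<and> lform f3 s t = 0 \<and> lform f4 s t = 0"
    then have "lincomb s (p1, p2, p3, p4) t (q1, q2, q3, q4) = (0, 0, 0, 0)"
      by (simp add: lincomb_def lform_def f1_def f2_def f3_def f4_def mult.commute)
    then show "s = 0 \<and> t = 0"
      using indep unfolding cindep2_def by blast
  qed
  have vanish: "1 * lform f1 s t ^ 5 + (-1) * lform f2 s t ^ 5
      + (-1) * lform f3 s t ^ 5 + 1 * lform f4 s t ^ 5 = 0" for s t
  proof -
    have "(lform f1 s t, lform f2 s t, lform f3 s t, lform f4 s t) \<in> L"
      unfolding L_forms form_line_def by blast
    then have "fermat5 (lform f1 s t, lform f2 s t, lform f3 s t, lform f4 s t) = 0"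
      using on by blast
    then show ?thesis by (simp add: fermat5_def)
  qed
  show thesis
    by (rule that[OF L_forms no_common_zero vanish])
qed

lemma line_on_F5_classification:
  assumes "line_on_F5 L"
  shows "\<exists>a\<in>mu5. \<exists>b\<in>mu5. L = line_xy a b \<or> L = line_xz a b \<or> L = line_xw a b"
proof -
  obtain f1 f2 f3 f4 where L_forms: "L = form_line f1 f2 f3 f4"
    and no_common_zero: "\<forall>s t. lform f1 s t = 0 \<and> lform f2 s t = 0 \<and> lform f3 s t = 0
      \<and> lform f4 s t = 0 \<longrightarrow> s = 0 \<and> t = 0"
    and vanish: "\<And>s t. 1 * lform f1 s t ^ 5 + (-1) * lform f2 s t ^ 5
      + (-1) * lform f3 s t ^ 5 + 1 * lform f4 s t ^ 5 = 0"
    using line_on_F5_form_line[OF assms] by blast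
  have charts: "det2 f1 f2 \<noteq> 0 \<or> det2 f1 f3 \<noteq> 0 \<or> det2 f1 f4 \<noteq> 0 \<or>
      det2 f2 f3 \<noteq> 0 \<or> det2 f2 f4 \<noteq> 0 \<or> det2 f3 f4 \<noteq> 0"
    using no_common_zero by (rule some_det2_nonzero)
  have ne: "(1::complex) \<noteq> 0" "(-1::complex) \<noteq> 0" by simp_all
  from diagonal_quintic_pairing[OF ne(1,2,2,1) no_common_zero vanish]
  show ?thesis
  proof (elim disjE conjE)
    assume "cancelling (-1) f2 1 f1" "cancelling 1 f4 (-1) f3"
    then obtain a b where "a^5 = 1" "f1 = (a * fst f2, a * snd f2)"
      and "b^5 = 1" "f3 = (b * fst f4, b * snd f4)"
      unfolding cancelling_def by (auto simp: add_eq_0_iff)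
    moreover from this have "det2 f2 f4 \<noteq> 0"
      using charts by (auto simp: det2_def algebra_simps)
    ultimately show ?thesis
      using form_line_eq_line_xy by (auto simp: L_forms mu5_def)
  next
    assume "cancelling (-1) f3 1 f1" "cancelling 1 f4 (-1) f2"
    then obtain a b where "a^5 = 1" "f1 = (a * fst f3, a * snd f3)"
      and "b^5 = 1" "f2 = (b * fst f4, b * snd f4)"
      unfolding cancelling_def by (auto simp: add_eq_0_iff)
    moreover from this have "det2 f3 f4 \<noteq> 0"
      using charts by (auto simp: det2_def algebra_simps)
    ultimately show ?thesis
      using form_line_eq_line_xz by (auto simp: L_forms mu5_def)
  next
    assume "cancelling 1 f4 1 f1" "cancelling (-1) f3 (-1) f2"
    then obtain a b where "(-a)^5 = -1" "f1 = (- a * fst f4, - a * snd f4)"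
      and "(-b)^5 = -1" "f2 = (- b * fst f3, - b * snd f3)"
      unfolding cancelling_def by (metis add_eq_0_iff minus_minus mult_1 mult_minus1)
    moreover from this have "det2 f3 f4 \<noteq> 0"
      using charts by (auto simp: det2_def algebra_simps)
    ultimately show ?thesis
      using form_line_eq_line_xw by (auto simp: L_forms mu5_def power_minus_odd)
  qed
qed

lemma line_xy_on_F5:
  assumes "a \<in> mu5" "b \<in> mu5"
  shows "line_on_F5 (line_xy a b)"
  unfolding line_on_F5_def proj_line_def
proof (intro conjI exI ballI)
  show "cindep2 (a, 1, 0, 0) (0, 0, b, 1)"
    by (simp add: cindep2_def lincomb_def)
  show "line_xy a b = cspan2 (a, 1, 0, 0) (0, 0, b, 1)"
    by (auto simp: line_xy_def cspan2_def lincomb_def)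
  show "fermat5 v = 0" if "v \<in> line_xy a b" for v
    using assms that by (auto simp: line_xy_def fermat5_def mu5_def power_mult_distrib)
qed

lemma line_xz_on_F5:
  assumes "a \<in> mu5" "b \<in> mu5"
  shows "line_on_F5 (line_xz a b)"
  unfolding line_on_F5_def proj_line_def
proof (intro conjI exI ballI)
  show "cindep2 (a, 0, 1, 0) (0, b, 0, 1)"
    by (simp add: cindep2_def lincomb_def)
  show "line_xz a b = cspan2 (a, 0, 1, 0) (0, b, 0, 1)"
    by (auto simp: line_xz_def cspan2_def lincomb_def)
  show "fermat5 v = 0" if "v \<in> line_xz a b" for v
    using assms that by (auto simp: line_xz_def fermat5_def mu5_def power_mult_distrib)
qed

lemma line_xw_on_F5:
  assumes "a \<in> mu5" "b \<in> mu5"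
  shows "line_on_F5 (line_xw a b)"
  unfolding line_on_F5_def proj_line_def
proof (intro conjI exI ballI)
  show "cindep2 (- a, 0, 0, 1) (0, - b, 1, 0)"
    by (simp add: cindep2_def lincomb_def)
  show "line_xw a b = cspan2 (- a, 0, 0, 1) (0, - b, 1, 0)"
    by (auto simp: line_xw_def cspan2_def lincomb_def)
  show "fermat5 v = 0" if "v \<in> line_xw a b" for v
    using assms that by (auto simp: line_xw_def fermat5_def mu5_def power_mult_distrib power_minus_odd)
qed

section \<open>Disjointness of the standard lines\<close>

lemma disjoint_lines_commute: "disjoint_lines L M \<longleftrightarrow> disjoint_lines M L"
  by (simp add: disjoint_lines_def Int_commute)

lemma disjoint_linesD: "disjoint_lines L M \<Longrightarrow> v \<in> L \<Longrightarrow> v \<in> M \<Longrightarrow> v = (0, 0, 0, 0)"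
  by (metis IntI disjoint_lines_def singletonD)

lemma disjoint_linesI:
  assumes "(0, 0, 0, 0) \<in> L" "(0, 0, 0, 0) \<in> M"
    and "\<And>x y z w. (x, y, z, w) \<in> L \<Longrightarrow> (x, y, z, w) \<in> M \<Longrightarrow> x = 0 \<and> y = 0 \<and> z = 0 \<and> w = 0"
  shows "disjoint_lines L M"
  unfolding disjoint_lines_def
proof (intro equalityI subsetI)
  fix v assume "v \<in> L \<inter> M"
  then show "v \<in> {(0, 0, 0, 0)}"
    using assms(3) by (cases v) auto
qed (use assms(1,2) in auto)

lemma disjoint_line_xy_xy: "disjoint_lines (line_xy a b) (line_xy c d) \<longleftrightarrow> a \<noteq> c \<and> b \<noteq> d"
proof
  assume disj: "disjoint_lines (line_xy a b) (line_xy c d)"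
  show "a \<noteq> c \<and> b \<noteq> d"
    using disjoint_linesD[OF disj, of "(a, 1, 0, 0)"] disjoint_linesD[OF disj, of "(0, 0, b, 1)"]
    by (auto simp: line_xy_def)
qed (rule disjoint_linesI; auto simp: line_xy_def)

lemma disjoint_line_xz_xz: "disjoint_lines (line_xz a b) (line_xz c d) \<longleftrightarrow> a \<noteq> c \<and> b \<noteq> d"
proof
  assume disj: "disjoint_lines (line_xz a b) (line_xz c d)"
  show "a \<noteq> c \<and> b \<noteq> d"
    using disjoint_linesD[OF disj, of "(a, 0, 1, 0)"] disjoint_linesD[OF disj, of "(0, b, 0, 1)"]
    by (auto simp: line_xz_def)
qed (rule disjoint_linesI; auto simp: line_xz_def)

lemma disjoint_line_xw_xw: "disjoint_lines (line_xw a b) (line_xw c d) \<longleftrightarrow> a \<noteq> c \<and> b \<noteq> d"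
proof
  assume disj: "disjoint_lines (line_xw a b) (line_xw c d)"
  show "a \<noteq> c \<and> b \<noteq> d"
    using disjoint_linesD[OF disj, of "(- a, 0, 0, 1)"] disjoint_linesD[OF disj, of "(0, - b, 1, 0)"]
    by (auto simp: line_xw_def)
qed (rule disjoint_linesI; auto simp: line_xw_def)

lemma disjoint_line_xy_xz: "disjoint_lines (line_xy a b) (line_xz c d) \<longleftrightarrow> a*d \<noteq> b*c"
proof
  assume disj: "disjoint_lines (line_xy a b) (line_xz c d)"
  show "a*d \<noteq> b*c"
    using disjoint_linesD[OF disj, of "(a*d, d, b, 1)"] by (auto simp: line_xy_def line_xz_def)
next
  assume ne: "a*d \<noteq> b*c"
  show "disjoint_lines (line_xy a b) (line_xz c d)"
  proof (rule disjoint_linesI)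
    fix x y z w
    assume "(x, y, z, w) \<in> line_xy a b"
    then have xy: "x = a*y" "z = b*w" by (simp_all add: line_xy_def)
    assume "(x, y, z, w) \<in> line_xz c d"
    then have xz: "x = c*z" "y = d*w" by (simp_all add: line_xz_def)
    have "a*d*w = a*y" using xz(2) by (simp add: mult.assoc)
    also have "\<dots> = c*z" using xy(1) xz(1) by simp
    also have "\<dots> = b*c*w" using xy(2) by (simp add: ac_simps)
    finally have "w = 0" using ne by simp
    then show "x = 0 \<and> y = 0 \<and> z = 0 \<and> w = 0" using xy xz by simp
  qed (simp_all add: line_xy_def line_xz_def)
qed

lemma disjoint_line_xy_xw: "disjoint_lines (line_xy a b) (line_xw c d) \<longleftrightarrow> a*b*d \<noteq> c"
proof
  assume disj: "disjoint_lines (line_xy a b) (line_xw c d)"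
  show "a*b*d \<noteq> c"
    using disjoint_linesD[OF disj, of "(- (a*b*d), - (b*d), b, 1)"]
    by (auto simp: line_xy_def line_xw_def)
next
  assume ne: "a*b*d \<noteq> c"
  show "disjoint_lines (line_xy a b) (line_xw c d)"
  proof (rule disjoint_linesI)
    fix x y z w
    assume "(x, y, z, w) \<in> line_xy a b"
    then have xy: "x = a*y" "z = b*w" by (simp_all add: line_xy_def)
    assume "(x, y, z, w) \<in> line_xw c d"
    then have xw: "x = - (c*w)" "y = - (d*z)" by (simp_all add: line_xw_def)
    have "a*b*d*w = - (a*y)" using xy(2) xw(2) by (simp add: ac_simps)
    also have "\<dots> = - x" using xy(1) by simp
    also have "\<dots> = c*w" using xw(1) by simp
    finally have "w = 0" using ne by simp
    then show "x = 0 \<and> y = 0 \<and> z = 0 \<and> w = 0" using xy xw by simp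
  qed (simp_all add: line_xy_def line_xw_def)
qed

lemma disjoint_line_xz_xw:
  assumes "a \<noteq> 0" "b \<noteq> 0"
  shows "disjoint_lines (line_xz a b) (line_xw c d) \<longleftrightarrow> a*b \<noteq> c*d"
proof
  assume disj: "disjoint_lines (line_xz a b) (line_xw c d)"
  show "a*b \<noteq> c*d"
    using disjoint_linesD[OF disj, of "(a*c, - (a*b), c, - a)"] assms
    by (auto simp: line_xz_def line_xw_def)
next
  assume ne: "a*b \<noteq> c*d"
  show "disjoint_lines (line_xz a b) (line_xw c d)"
  proof (rule disjoint_linesI)
    fix x y z w
    assume "(x, y, z, w) \<in> line_xz a b"
    then have xz: "x = a*z" "y = b*w" by (simp_all add: line_xz_def)
    assume "(x, y, z, w) \<in> line_xw c d"
    then have xw: "x = - (c*w)" "y = - (d*z)" by (simp_all add: line_xw_def)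
    have zw: "a*z = - (c*w)" "b*w = - (d*z)" using xz xw by simp_all
    have "a*b*z = b*(a*z)" by (simp only: ac_simps)
    also have "\<dots> = - (c*(b*w))" unfolding zw(1) by (simp add: ac_simps)
    also have "\<dots> = c*d*z" unfolding zw(2) by (simp add: ac_simps)
    finally have "z = 0" using ne by simp
    then show "x = 0 \<and> y = 0 \<and> z = 0 \<and> w = 0" using xz xw assms by simp
  qed (simp_all add: line_xz_def line_xw_def)
qed

lemma line_xy_eq_iff: "line_xy a b = line_xy c d \<longleftrightarrow> a = c \<and> b = d"
proof
  assume eq: "line_xy a b = line_xy c d"
  have "(a, 1, 0, 0) \<in> line_xy c d" "(0, 0, b, 1) \<in> line_xy c d"
    unfolding eq[symmetric] by (simp_all add: line_xy_def)
  then show "a = c \<and> b = d" by (simp add: line_xy_def)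
qed simp

lemma line_xz_eq_iff: "line_xz a b = line_xz c d \<longleftrightarrow> a = c \<and> b = d"
proof
  assume eq: "line_xz a b = line_xz c d"
  have "(a, 0, 1, 0) \<in> line_xz c d" "(0, b, 0, 1) \<in> line_xz c d"
    unfolding eq[symmetric] by (simp_all add: line_xz_def)
  then show "a = c \<and> b = d" by (simp add: line_xz_def)
qed simp

lemma line_xw_eq_iff: "line_xw a b = line_xw c d \<longleftrightarrow> a = c \<and> b = d"
proof
  assume eq: "line_xw a b = line_xw c d"
  have "(- a, 0, 0, 1) \<in> line_xw c d" "(0, - b, 1, 0) \<in> line_xw c d"
    unfolding eq[symmetric] by (simp_all add: line_xw_def)
  then show "a = c \<and> b = d" by (simp add: line_xw_def)
qed simp

lemma line_xy_neq_line_xz: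
  assumes "a \<noteq> 0"
  shows "line_xy a b \<noteq> line_xz c d"
proof
  assume eq: "line_xy a b = line_xz c d"
  have "(a, 1, 0, 0) \<in> line_xz c d"
    unfolding eq[symmetric] by (simp add: line_xy_def)
  then show False using assms by (simp add: line_xz_def)
qed

lemma line_xy_neq_line_xw:
  assumes "a \<noteq> 0"
  shows "line_xy a b \<noteq> line_xw c d"
proof
  assume eq: "line_xy a b = line_xw c d"
  have "(a, 1, 0, 0) \<in> line_xw c d"
    unfolding eq[symmetric] by (simp add: line_xy_def)
  then show False using assms by (simp add: line_xw_def)
qed

lemma line_xz_neq_line_xw:
  assumes "a \<noteq> 0"
  shows "line_xz a b \<noteq> line_xw c d"
proof
  assume eq: "line_xz a b = line_xw c d"
  have "(a, 0, 1, 0) \<in> line_xw c d"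
    unfolding eq[symmetric] by (simp add: line_xz_def)
  then show False using assms by (simp add: line_xw_def)
qed

section \<open>Partial permutations of the fifth roots of unity\<close>

definition partial_perm :: "'a set \<Rightarrow> ('a \<times> 'a) set \<Rightarrow> bool" where
  "partial_perm A P \<longleftrightarrow> P \<subseteq> A \<times> A \<and> inj_on fst P \<and> inj_on snd P"

text \<open>These invariants decide disjointness of lines from different families.\<close>

definition pair_quot :: "complex \<times> complex \<Rightarrow> complex" where
  "pair_quot p = fst p / snd p"

definition pair_mult :: "complex \<times> complex \<Rightarrow> complex" where
  "pair_mult p = fst p * snd p"

lemma card_partial_perm_le:
  assumes "finite A" "partial_perm A P"
  shows "card P \<le> card A"
proof -
  have "card P = card (fst ` P)"
    using assms(2) by (simp add: partial_perm_def card_image)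
  also have "\<dots> \<le> card A"
    using assms by (intro card_mono) (auto simp: partial_perm_def)
  finally show ?thesis .
qed

lemma finite_partial_perm: "finite A \<Longrightarrow> partial_perm A P \<Longrightarrow> finite P"
  using finite_subset[of P "A \<times> A"] by (simp add: partial_perm_def)

lemma partial_perm_fst_image:
  assumes "finite A" "partial_perm A P" "card P = card A"
  shows "fst ` P = A"
  using assms by (intro card_subset_eq) (auto simp: partial_perm_def card_image)

lemma mu5_quot_mult_cancel:
  assumes "a \<in> mu5" "b \<in> mu5" "c \<in> mu5" "d \<in> mu5" "a / b = c / d" "a * b = c * d"
  shows "a = c \<and> b = d"
proof -
  have "a^2 = (a / b) * (a * b)"
    using mu5_nonzero[OF assms(2)] by (simp add: power2_eq_square)
  also have "\<dots> = c^2"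
    using assms(5,6) mu5_nonzero[OF assms(4)] by (simp add: power2_eq_square)
  finally have "a = c"
    using inj_onD[OF inj_on_square_mu5 _ assms(1,3)] by simp
  then show ?thesis
    using assms(6) mu5_nonzero[OF assms(1)] by simp
qed

lemma inj_on_quot_mult: "inj_on (\<lambda>p. (pair_quot p, pair_mult p)) (mu5 \<times> mu5)"
proof (rule inj_onI)
  fix p q
  assume "p \<in> mu5 \<times> mu5" "q \<in> mu5 \<times> mu5" "(pair_quot p, pair_mult p) = (pair_quot q, pair_mult q)"
  then show "p = q"
    using mu5_quot_mult_cancel[of "fst p" "snd p" "fst q" "snd q"]
    by (simp add: pair_quot_def pair_mult_def mem_Times_iff prod_eq_iff)
qed

lemma card_le_card_quot_times_mult:
  assumes "P \<subseteq> mu5 \<times> mu5"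
  shows "card P \<le> card (pair_quot ` P) * card (pair_mult ` P)"
proof -
  have "card P = card ((\<lambda>p. (pair_quot p, pair_mult p)) ` P)"
    using inj_on_subset[OF inj_on_quot_mult assms] by (simp add: card_image)
  also have "\<dots> \<le> card (pair_quot ` P \<times> pair_mult ` P)"
    using finite_subset[OF assms] by (intro card_mono) auto
  finally show ?thesis by (simp add: card_cartesian_product)
qed

lemma card_mult_image_if_quot_const:
  assumes "P \<subseteq> mu5 \<times> mu5" "card (pair_quot ` P) = 1"
  shows "card (pair_mult ` P) = card P"
proof -
  obtain c where "pair_quot ` P = {c}"
    using assms(2) by (rule card_1_singletonE)
  then have quot: "pair_quot p = c" if "p \<in> P" for p
    using that by blast
  have "inj_on pair_mult P"
  proof (rule inj_onI)
    fix p q assume "p \<in> P" "q \<in> P" "pair_mult p = pair_mult q"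
    then show "p = q"
      using inj_onD[OF inj_on_quot_mult, of p q] assms(1) quot by auto
  qed
  then show ?thesis by (simp add: card_image)
qed

lemma pair_quot_mu5: "p \<in> mu5 \<times> mu5 \<Longrightarrow> pair_quot p \<in> mu5"
  by (auto simp: pair_quot_def)

lemma pair_mult_mu5: "p \<in> mu5 \<times> mu5 \<Longrightarrow> pair_mult p \<in> mu5"
  by (auto simp: pair_mult_def)

lemma card_quot_image_neq_2:
  assumes P: "partial_perm mu5 P" "card P = 5"
  shows "card (pair_quot ` P) \<noteq> 2"
proof
  assume "card (pair_quot ` P) = 2"
  then obtain c c' where cc: "pair_quot ` P = {c, c'}" "c \<noteq> c'"
    by (meson card_2_iff)
  have PU: "P \<subseteq> mu5 \<times> mu5" and inj: "inj_on fst P" "inj_on snd P"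
    using P(1) by (simp_all add: partial_perm_def)
  have "pair_quot ` P \<subseteq> mu5"
    using PU pair_quot_mu5 by blast
  then have "c \<in> mu5" "c' \<in> mu5"
    using cc(1) by auto
  define level where "level d = {p \<in> P. pair_quot p = d}" for d
  have snd_level: "snd ` level d = (*) (inverse d) ` fst ` level d" for d
  proof -
    have "snd p = inverse d * fst p" if "p \<in> level d" for p
    proof -
      have "fst p \<noteq> 0" "snd p \<noteq> 0" "fst p / snd p = d"
        using that PU mu5_nonzero by (auto simp: level_def pair_quot_def)
      then show ?thesis by (auto simp: field_simps)
    qed
    then show ?thesis by (simp add: image_image cong: image_cong)
  qed
  have "fst p \<noteq> fst q" "snd p \<noteq> snd q" if "p \<in> level c" "q \<in> level c'" for p q
    using that inj_onD[OF inj(1), of p q] inj_onD[OF inj(2), of p q] cc(2)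
    by (auto simp: level_def)
  then have disj_fst: "fst ` level c \<inter> fst ` level c' = {}"
    and disj_snd: "(*) (inverse c) ` fst ` level c \<inter> (*) (inverse c') ` fst ` level c' = {}"
    unfolding snd_level[symmetric] by blast+
  have "level c \<union> level c' = P"
    using cc(1) by (auto simp: level_def)
  then have "fst ` level c \<union> fst ` level c' = mu5"
    using partial_perm_fst_image[OF finite_mu5 P(1)] P(2) by (simp flip: image_Un)
  from mu5_no_split[OF this disj_fst mu5_inverse mu5_inverse disj_snd] \<open>c \<in> mu5\<close> \<open>c' \<in> mu5\<close>
  have "fst ` level c = {} \<or> fst ` level c' = {} \<or> inverse c = inverse c'"
    by blast
  moreover have "level d \<noteq> {}" if "d \<in> pair_quot ` P" for d
    using that unfolding level_def by blast
  ultimately show False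
    using cc by simp
qed

lemma partial_perm_invert_fst:
  assumes "partial_perm mu5 P"
  shows "partial_perm mu5 (apfst inverse ` P)"
    and "card (apfst inverse ` P) = card P"
    and "card (pair_quot ` apfst inverse ` P) = card (pair_mult ` P)"
    and "card (pair_mult ` apfst inverse ` P) = card (pair_quot ` P)"
proof -
  have inj: "inj (apfst (inverse :: complex \<Rightarrow> complex))"
    by (rule inj_onI) (simp add: apfst_def map_prod_def split: prod.splits)
  have "apfst inverse ` P \<subseteq> mu5 \<times> mu5"
    using assms by (fastforce simp: partial_perm_def)
  then show "partial_perm mu5 (apfst inverse ` P)"
    using assms by (auto simp: partial_perm_def inj_on_def)
  show "card (apfst inverse ` P) = card P"
    using inj_on_subset[OF inj subset_UNIV] by (rule card_image)
  have "pair_quot ` apfst inverse ` P = inverse ` pair_mult ` P"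
    and "pair_mult ` apfst inverse ` P = inverse ` pair_quot ` P"
    by (force simp: pair_quot_def pair_mult_def field_simps)+
  then show "card (pair_quot ` apfst inverse ` P) = card (pair_mult ` P)"
    and "card (pair_mult ` apfst inverse ` P) = card (pair_quot ` P)"
    by (simp_all add: card_image inj_on_def)
qed

lemma card_quot_mult_ge_6:
  assumes P: "partial_perm mu5 P" "card P = 5"
  shows "6 \<le> card (pair_quot ` P) + card (pair_mult ` P)"
proof -
  have PU: "P \<subseteq> mu5 \<times> mu5"
    using P(1) by (simp add: partial_perm_def)
  note inv = partial_perm_invert_fst[OF P(1)]
  have "card (pair_quot ` P) \<noteq> 2" "card (pair_mult ` P) \<noteq> 2"
    using card_quot_image_neq_2[OF P] card_quot_image_neq_2[OF inv(1)] inv(2-4) P(2) by simp_all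
  moreover have "card (pair_quot ` P) = 1 \<Longrightarrow> card (pair_mult ` P) = 5"
    and "card (pair_mult ` P) = 1 \<Longrightarrow> card (pair_quot ` P) = 5"
    using card_mult_image_if_quot_const[OF PU] P(2)
      card_mult_image_if_quot_const[of "apfst inverse ` P"] inv by (auto simp: partial_perm_def)
  moreover have "5 \<le> card (pair_quot ` P) * card (pair_mult ` P)"
    using card_le_card_quot_times_mult[OF PU] P(2) by simp
  ultimately show ?thesis
    by (cases "card (pair_quot ` P) \<le> 1"; cases "card (pair_mult ` P) \<le> 1")
      (auto simp: le_Suc_eq)
qed

lemma partial_perm_card_bound:
  assumes "partial_perm mu5 P"
  shows "2 * card P \<le> card (pair_quot ` P) + card (pair_mult ` P) + 4"
proof (cases "card P = 5")
  case True
  then show ?thesis using card_quot_mult_ge_6[OF assms] by simp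
next
  case False
  then have "card P \<le> 4"
    using card_partial_perm_le[OF finite_mu5 assms] by simp
  have prod: "card P \<le> card (pair_quot ` P) * card (pair_mult ` P)"
    using assms by (intro card_le_card_quot_times_mult) (simp add: partial_perm_def)
  have small: "q * m \<le> 2" if "q + m \<le> 3" for q m :: nat
  proof -
    have "q \<in> {0, 1, 2, 3}" using that by auto
    then show ?thesis using that by auto
  qed
  show ?thesis
  proof (rule ccontr)
    assume neg: "\<not> ?thesis"
    then have "card (pair_quot ` P) + card (pair_mult ` P) \<le> 3"
      using \<open>card P \<le> 4\<close> by linarith
    then have "card P \<le> 2"
      using small prod le_trans by blast
    then show False
      using neg by linarith
  qed
qed

lemma card_three_partial_perms_le_13:
  assumes P: "partial_perm mu5 PA" "partial_perm mu5 PB" "partial_perm mu5 PC"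
    and "pair_quot ` PA \<inter> pair_quot ` PB = {}" "pair_mult ` PA \<inter> pair_quot ` PC = {}"
      "pair_mult ` PB \<inter> pair_mult ` PC = {}"
  shows "card PA + card PB + card PC \<le> 13"
proof -
  have images: "pair_quot ` P \<subseteq> mu5" "pair_mult ` P \<subseteq> mu5" if "partial_perm mu5 P" for P
    using that pair_quot_mu5 pair_mult_mu5 unfolding partial_perm_def by blast+
  have disjoint_le_5: "card X + card Y \<le> 5" if "X \<subseteq> mu5" "Y \<subseteq> mu5" "X \<inter> Y = {}" for X Y
  proof -
    have "card X + card Y = card (X \<union> Y)"
      using that finite_subset[OF _ finite_mu5] by (simp add: card_Un_disjoint)
    also have "\<dots> \<le> card mu5"
      using that by (intro card_mono) auto
    finally show ?thesis by simp
  qed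
  have "card (pair_quot ` PA) + card (pair_quot ` PB) \<le> 5"
    "card (pair_mult ` PA) + card (pair_quot ` PC) \<le> 5"
    "card (pair_mult ` PB) + card (pair_mult ` PC) \<le> 5"
    using disjoint_le_5[OF images(1)[OF P(1)] images(1)[OF P(2)] assms(4)]
      disjoint_le_5[OF images(2)[OF P(1)] images(1)[OF P(3)] assms(5)]
      disjoint_le_5[OF images(2)[OF P(2)] images(2)[OF P(3)] assms(6)] by simp_all
  then show ?thesis
    using partial_perm_card_bound[OF P(1)] partial_perm_card_bound[OF P(2)]
      partial_perm_card_bound[OF P(3)] by linarith
qed

section \<open>At most thirteen disjoint lines\<close>

definition params :: "(complex \<Rightarrow> complex \<Rightarrow> cvec4 set) \<Rightarrow> cvec4 set set \<Rightarrow> (complex \<times> complex) set" where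
  "params F S = {(a, b) \<in> mu5 \<times> mu5. F a b \<in> S}"

lemma partial_perm_params:
  fixes F :: "complex \<Rightarrow> complex \<Rightarrow> cvec4 set"
  assumes inj: "\<And>a b c d. F a b = F c d \<Longrightarrow> a = c \<and> b = d"
    and disjoint_params: "\<And>a b c d. disjoint_lines (F a b) (F c d) \<Longrightarrow> a \<noteq> c \<and> b \<noteq> d"
    and disj: "\<forall>L\<in>S. \<forall>M\<in>S. L \<noteq> M \<longrightarrow> disjoint_lines L M"
  shows "partial_perm mu5 (params F S)"
proof -
  have key: "a = c \<and> b = d" if "F a b \<in> S" "F c d \<in> S" "a = c \<or> b = d" for a b c d
  proof (rule inj)
    show "F a b = F c d"
    proof (rule ccontr)
      assume "F a b \<noteq> F c d"
      then have "disjoint_lines (F a b) (F c d)"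
        using disj that by blast
      then show False
        using disjoint_params that(3) by blast
    qed
  qed
  show ?thesis
    unfolding partial_perm_def inj_on_def params_def using key by fastforce
qed

lemma lines_on_F5_subset_params:
  assumes "\<forall>L\<in>S. line_on_F5 L"
  shows "S \<subseteq> case_prod line_xy ` params line_xy S \<union> case_prod line_xz ` params line_xz S
              \<union> case_prod line_xw ` params line_xw S"
proof
  fix L assume "L \<in> S"
  then obtain a b where "a \<in> mu5" "b \<in> mu5" "L = line_xy a b \<or> L = line_xz a b \<or> L = line_xw a b"
    using assms line_on_F5_classification by blast
  with \<open>L \<in> S\<close> show "L \<in> case_prod line_xy ` params line_xy S \<union> case_prod line_xz ` params line_xz S
              \<union> case_prod line_xw ` params line_xw S"
    unfolding params_def by force
qed

lemma params_separated:
  assumes disj: "\<forall>L\<in>S. \<forall>M\<in>S. L \<noteq> M \<longrightarrow> disjoint_lines L M"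
  shows "pair_quot ` params line_xy S \<inter> pair_quot ` params line_xz S = {}"
    and "pair_mult ` params line_xy S \<inter> pair_quot ` params line_xw S = {}"
    and "pair_mult ` params line_xz S \<inter> pair_mult ` params line_xw S = {}"
proof -
  have mu: "a \<in> mu5" "b \<in> mu5" "a \<noteq> 0" "b \<noteq> 0" if "(a, b) \<in> params F S" for F a b
    using that mu5_nonzero by (auto simp: params_def)
  have meet: "disjoint_lines (F a b) (G c d)"
    if "(a, b) \<in> params F S" "(c, d) \<in> params G S" "F a b \<noteq> G c d" for F G a b c d
    using that disj by (auto simp: params_def)
  have "a / b \<noteq> c / d" if "(a, b) \<in> params line_xy S" "(c, d) \<in> params line_xz S" for a b c d
    using meet[OF that line_xy_neq_line_xz] mu[OF that(1)] mu[OF that(2)]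
    by (simp add: disjoint_line_xy_xz frac_eq_eq mult.commute)
  then show "pair_quot ` params line_xy S \<inter> pair_quot ` params line_xz S = {}"
    by (fastforce simp: pair_quot_def)
  have "a * b \<noteq> c / d" if "(a, b) \<in> params line_xy S" "(c, d) \<in> params line_xw S" for a b c d
    using meet[OF that line_xy_neq_line_xw] mu[OF that(1)] mu[OF that(2)]
    by (simp add: disjoint_line_xy_xw eq_divide_eq mult.assoc)
  then show "pair_mult ` params line_xy S \<inter> pair_quot ` params line_xw S = {}"
    by (fastforce simp: pair_quot_def pair_mult_def)
  have "a * b \<noteq> c * d" if "(a, b) \<in> params line_xz S" "(c, d) \<in> params line_xw S" for a b c d
    using meet[OF that line_xz_neq_line_xw] mu[OF that(1)] mu[OF that(2)]
    by (simp add: disjoint_line_xz_xw)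
  then show "pair_mult ` params line_xz S \<inter> pair_mult ` params line_xw S = {}"
    by (fastforce simp: pair_mult_def)
qed

lemma card_disjoint_lines_on_F5_le_13:
  assumes on: "\<forall>L\<in>S. line_on_F5 L" and disj: "\<forall>L\<in>S. \<forall>M\<in>S. L \<noteq> M \<longrightarrow> disjoint_lines L M"
  shows "finite S \<and> card S \<le> 13"
proof -
  have perms: "partial_perm mu5 (params line_xy S)" "partial_perm mu5 (params line_xz S)"
    "partial_perm mu5 (params line_xw S)"
    by (rule partial_perm_params[OF _ _ disj];
        simp add: line_xy_eq_iff line_xz_eq_iff line_xw_eq_iff
          disjoint_line_xy_xy disjoint_line_xz_xz disjoint_line_xw_xw)+
  then have fin: "finite (params line_xy S)" "finite (params line_xz S)" "finite (params line_xw S)"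
    by (simp_all add: finite_partial_perm[OF finite_mu5])
  define A B C where "A = case_prod line_xy ` params line_xy S"
    and "B = case_prod line_xz ` params line_xz S" and "C = case_prod line_xw ` params line_xw S"
  have "S \<subseteq> A \<union> B \<union> C"
    using lines_on_F5_subset_params[OF on] by (simp add: A_def B_def C_def)
  moreover have "finite (A \<union> B \<union> C)"
    using fin by (simp add: A_def B_def C_def)
  ultimately have "finite S" and "card S \<le> card (A \<union> B \<union> C)"
    by (auto intro: finite_subset card_mono)
  note \<open>card S \<le> card (A \<union> B \<union> C)\<close>
  also have "\<dots> \<le> card A + card B + card C"
    using card_Un_le[of "A \<union> B" C] card_Un_le[of A B] by simp
  also have "\<dots> \<le> card (params line_xy S) + card (params line_xz S) + card (params line_xw S)"
    unfolding A_def B_def C_def by (intro add_mono card_image_le fin)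
  also have "\<dots> \<le> 13"
    using card_three_partial_perms_le_13[OF perms params_separated[OF disj]] .
  finally show ?thesis using \<open>finite S\<close> by simp
qed

section \<open>Thirteen disjoint lines\<close>

definition root5 :: "nat \<Rightarrow> complex" where
  "root5 k = cis (2 * pi / 5) ^ k"

lemma root5_mult [simp]: "root5 i * root5 j = root5 (i + j)"
  by (simp add: root5_def power_add)

lemma root5_nonzero [simp]: "root5 k \<noteq> 0"
  by (simp add: root5_def)

lemma root5_5: "root5 5 = 1"
  by (simp add: root5_def DeMoivre)

lemma root5_in_mu5: "root5 k \<in> mu5"
proof -
  have "root5 k ^ 5 = root5 5 ^ k"
    by (simp add: root5_def mult.commute flip: power_mult)
  then show ?thesis by (simp add: mu5_def root5_5)
qed

lemma root5_mod: "root5 k = root5 (k mod 5)"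
proof -
  have "root5 k = root5 (5 * (k div 5) + k mod 5)"
    by simp
  also have "\<dots> = root5 5 ^ (k div 5) * root5 (k mod 5)"
    by (simp only: root5_def power_add power_mult)
  finally show ?thesis
    by (simp add: root5_5)
qed

lemma root5_eq_iff [simp]: "root5 i = root5 j \<longleftrightarrow> i mod 5 = j mod 5"
proof
  have inj: "inj_on (\<lambda>k. cis (2 * pi * real k / real 5)) {..<5}"
    by (rule bij_betw_imp_inj_on[OF bij_betw_roots_unity]) simp
  have cis: "root5 k = cis (2 * pi * real k / real 5)" for k
    by (simp add: root5_def DeMoivre algebra_simps)
  assume "root5 i = root5 j"
  then have "root5 (i mod 5) = root5 (j mod 5)"
    by (simp flip: root5_mod)
  then show "i mod 5 = j mod 5"
    using inj_onD[OF inj] by (simp add: cis)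
qed (metis root5_mod)

text \<open>Modulo 5, \<open>i - j\<close> lies in \<open>{0,1,4}\<close> on the first family and in \<open>{2,3}\<close> on the
  second; \<open>i + j\<close> lies in \<open>{0,2,4}\<close> resp. \<open>{2,4}\<close> on the first two families, while on the
  third family \<open>i - j\<close> lies in \<open>{1,3}\<close> and \<open>i + j\<close> in \<open>{0,1}\<close>.\<close>

definition config13 :: "cvec4 set set" where
  "config13 =
     (\<lambda>(i, j). line_xy (root5 i) (root5 j)) ` {(0, 0), (1, 1), (2, 2), (3, 4), (4, 3)} \<union>
     (\<lambda>(i, j). line_xz (root5 i) (root5 j)) ` {(0, 2), (1, 3), (2, 0), (3, 1)} \<union>
     (\<lambda>(i, j). line_xw (root5 i) (root5 j)) ` {(1, 0), (2, 4), (3, 2), (4, 1)}"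

lemma config13_pairwise_disjoint:
  "\<forall>L\<in>config13. \<forall>M\<in>config13. L \<noteq> M \<longrightarrow> disjoint_lines L M"
  unfolding config13_def
  by (simp add: disjoint_line_xy_xy disjoint_line_xz_xz disjoint_line_xw_xw
      disjoint_line_xy_xz disjoint_line_xy_xw disjoint_line_xz_xw
      disjoint_lines_commute[of "line_xz c d" "line_xy a b" for a b c d]
      disjoint_lines_commute[of "line_xw c d" "line_xy a b" for a b c d]
      disjoint_lines_commute[of "line_xw c d" "line_xz a b" for a b c d])

lemma finite_config13: "finite config13"
  by (simp add: config13_def)

lemma card_config13: "card config13 = 13"
  unfolding config13_def
  by (simp add: line_xy_eq_iff line_xz_eq_iff line_xw_eq_iff
      line_xy_neq_line_xz line_xy_neq_line_xw line_xz_neq_line_xw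
      line_xy_neq_line_xz[THEN not_sym] line_xy_neq_line_xw[THEN not_sym]
      line_xz_neq_line_xw[THEN not_sym])

lemma config13_on_F5: "\<forall>L\<in>config13. line_on_F5 L"
  unfolding config13_def
  by (simp add: line_xy_on_F5 line_xz_on_F5 line_xw_on_F5 root5_in_mu5)

theorem theorem3p6:
  shows "(\<exists>S. finite S \<and> card S = 13 \<and> (\<forall>L\<in>S. line_on_F5 L) \<and>
            (\<forall>L\<in>S. \<forall>M\<in>S. L \<noteq> M \<longrightarrow> disjoint_lines L M))
       \<and> (\<forall>S. (\<forall>L\<in>S. line_on_F5 L) \<and>
               (\<forall>L\<in>S. \<forall>M\<in>S. L \<noteq> M \<longrightarrow> disjoint_lines L M)
               \<longrightarrow> finite S \<and> card S \<le> 13)"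
proof (rule conjI)
  show "\<exists>S. finite S \<and> card S = 13 \<and> (\<forall>L\<in>S. line_on_F5 L) \<and>
      (\<forall>L\<in>S. \<forall>M\<in>S. L \<noteq> M \<longrightarrow> disjoint_lines L M)"
    using finite_config13 card_config13 config13_on_F5 config13_pairwise_disjoint by blast
  show "\<forall>S. (\<forall>L\<in>S. line_on_F5 L) \<and> (\<forall>L\<in>S. \<forall>M\<in>S. L \<noteq> M \<longrightarrow> disjoint_lines L M)
      \<longrightarrow> finite S \<and> card S \<le> 13"
    using card_disjoint_lines_on_F5_le_13 by blast
qed

end
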